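(* For all positive integers $k,\ell,n$ there exists a graph $G$ with pathwidth at most $k+1$ such that for every graph $H$ and every path $P$, if $G$ is isomorphic to a subgraph of $H\boxtimes P\boxtimes K_\ell$, then $P_n+K_k$ is isomorphic to a subgraph of $H$.
   Context: Graphs are finite and simple. $P_n$ is the path on $n$ vertices and $K_m$ the complete graph on $m$ vertices. The complete join $G+H$ is the disjoint union of $G$ and $H$ together with all edges between $V(G)$ and $V(H)$. The strong product $G\boxtimes H$ has vertex set $V(G)\times V(H)$ with $(v,w)\sim(v',w')$ if ($v=v'$ and $ww'\in E(H)$) or ($w=w'$ and $vv'\in E(G)$) or ($vv'\in E(G)$ and $ww'\in E(H)$). Pathwidth is the usual parameter (minimum over path-decompositions of the maximum bag size minus one). *)

theory Defs
  imports Main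
begin

text \<open>A finite simple graph: a finite vertex set and a symmetric, irreflexive
edge relation on it (an edge vw is stored as both (v,w) and (w,v)).\<close>

type_synonym 'a graph = "'a set \<times> ('a \<times> 'a) set"

definition verts :: "'a graph \<Rightarrow> 'a set" where "verts G = fst G"
definition edges :: "'a graph \<Rightarrow> ('a \<times> 'a) set" where "edges G = snd G"

definition is_graph :: "'a graph \<Rightarrow> bool" where
  "is_graph G \<longleftrightarrow> finite (verts G) \<and> edges G \<subseteq> verts G \<times> verts G
     \<and> sym (edges G) \<and> (\<forall>v. (v, v) \<notin> edges G)"

definition path_graph :: "nat \<Rightarrow> nat graph" where
  "path_graph n = ({0..<n}, {(i, j). i < n \<and> j < n \<and> (j = i + 1 \<or> i = j + 1)})"

definition complete_graph :: "nat \<Rightarrow> nat graph" where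
  "complete_graph m = ({0..<m}, {(i, j). i < m \<and> j < m \<and> i \<noteq> j})"

definition strong_product :: "'a graph \<Rightarrow> 'b graph \<Rightarrow> ('a \<times> 'b) graph" where
  "strong_product G H = (verts G \<times> verts H,
     {((v, w), (v', w')). v \<in> verts G \<and> v' \<in> verts G \<and> w \<in> verts H \<and> w' \<in> verts H \<and>
        ((v = v' \<and> (w, w') \<in> edges H) \<or> (w = w' \<and> (v, v') \<in> edges G)
         \<or> ((v, v') \<in> edges G \<and> (w, w') \<in> edges H))})"

definition complete_join :: "'a graph \<Rightarrow> 'b graph \<Rightarrow> ('a + 'b) graph" where
  "complete_join G H = (Inl ` verts G \<union> Inr ` verts H,
     {(Inl u, Inl v) | u v. (u, v) \<in> edges G} \<union> {(Inr u, Inr v) | u v. (u, v) \<in> edges H}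
     \<union> {(Inl u, Inr v) | u v. u \<in> verts G \<and> v \<in> verts H}
     \<union> {(Inr v, Inl u) | u v. u \<in> verts G \<and> v \<in> verts H})"

definition subgraph_iso :: "'a graph \<Rightarrow> 'b graph \<Rightarrow> bool" where
  "subgraph_iso G H \<longleftrightarrow> (\<exists>f. inj_on f (verts G) \<and> f ` verts G \<subseteq> verts H \<and>
     (\<forall>u v. (u, v) \<in> edges G \<longrightarrow> (f u, f v) \<in> edges H))"

definition path_decomposition :: "'a graph \<Rightarrow> 'a set list \<Rightarrow> bool" where
  "path_decomposition G bs \<longleftrightarrow>
     (\<forall>B \<in> set bs. B \<subseteq> verts G) \<and>
     (\<forall>v \<in> verts G. \<exists>i < length bs. v \<in> bs ! i) \<and>
     (\<forall>u v. (u, v) \<in> edges G \<longrightarrow> (\<exists>i < length bs. u \<in> bs ! i \<and> v \<in> bs ! i)) \<and>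
     (\<forall>v i j k. i \<le> j \<and> j \<le> k \<and> k < length bs \<and> v \<in> bs ! i \<and> v \<in> bs ! k \<longrightarrow> v \<in> bs ! j)"

definition pathwidth :: "'a graph \<Rightarrow> nat" where
  "pathwidth G = (LEAST w. \<exists>bs. path_decomposition G bs \<and> (\<forall>B \<in> set bs. card B \<le> w + 1))"

end

theory Submission
  imports Defs "HOL-Library.Countable"
begin

(* The witness is the complete C-ary tree of height k, C = 3l + 1, with every leaf replaced by a
   path on N vertices and every internal node joined to all of its descendants.  Its bags, one for
   each edge of a leaf path together with the k ancestors of that leaf, form a path-decomposition
   of width k + 1.

   Given an embedding of it into the strong product of H, P and K_l, let phi be the projection to H.
   The root is adjacent to everything, so the P-coordinates of all images lie within one of the
   root's, and phi has at most 3l < C preimages at each vertex of H.  Hence every internal node u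
   has a child whose subtree avoids phi u under phi, and so is mapped into the neighbourhood of
   phi u.  Descending from the root through such children collects a k-clique of H complete to the
   image of a leaf path; that image is a walk in H visiting no vertex more than 3l times, and
   therefore contains a path on n vertices once N is large enough. *)

section \<open>Walks with bounded multiplicity\<close>

lemma successively_map_upt:
  assumes "\<And>i. Suc i < N \<Longrightarrow> P (g i) (g (Suc i))"
  shows "successively P (map g [0..<N])"
  using assms
proof (induction N)
  case (Suc N)
  then show ?case
    by (cases N) (auto simp: successively_append_iff last_map)
qed simp

lemma successively_nth:
  "successively P xs \<Longrightarrow> Suc i < length xs \<Longrightarrow> P (xs ! i) (xs ! Suc i)"
proof (induction xs arbitrary: i)
  case (Cons x xs)
  then show ?case
    by (cases i) (auto simp: successively_Cons hd_conv_nth)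
qed simp

fun walk_bound :: "nat \<Rightarrow> nat \<Rightarrow> nat" where
  "walk_bound c 0 = 1"
| "walk_bound c (Suc n) = c * (walk_bound c n + 1)"

lemma walk_bound_pos: "1 \<le> c \<Longrightarrow> 1 \<le> walk_bound c n"
  by (induction n) auto

lemma long_gap_after_occurrence:
  assumes "count_list (x # xs) x \<le> j" and "j * (F + 1) \<le> length (x # xs)"
  shows "\<exists>pre ys post. x # xs = pre @ x # ys @ post \<and> x \<notin> set ys \<and> F \<le> length ys"
  using assms
proof (induction j arbitrary: xs)
  case 0
  then show ?case by simp
next
  case (Suc j)
  show ?case
  proof (cases "x \<in> set xs")
    case False
    with Suc.prems(2) show ?thesis
      by (intro exI[of _ "[]"] exI[of _ xs] exI[of _ "[]"]) auto
  next
    case True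
    then obtain ys zs where xs: "xs = ys @ x # zs" and "x \<notin> set ys"
      by (auto dest: split_list_first)
    show ?thesis
    proof (cases "F \<le> length ys")
      case True
      with xs \<open>x \<notin> set ys\<close> show ?thesis
        by (intro exI[of _ "[]"] exI[of _ ys] exI[of _ "x # zs"]) auto
    next
      case False
      have "count_list (x # zs) x \<le> j"
        using Suc.prems(1) xs \<open>x \<notin> set ys\<close> by simp
      moreover have "j * (F + 1) \<le> length (x # zs)"
        using Suc.prems(2) xs False by simp
      ultimately obtain pre ys' post
        where "x # zs = pre @ x # ys' @ post" "x \<notin> set ys'" "F \<le> length ys'"
        using Suc.IH by blast
      with xs show ?thesis
        by (intro exI[of _ "x # ys @ pre"] exI[of _ ys'] exI[of _ post]) auto
    qed
  qed
qed

lemma lazy_walk_contains_path: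
  assumes "successively (\<lambda>x y. x = y \<or> (x, y) \<in> E) xs" and "xs \<noteq> []"
    and "\<forall>y. count_list xs y \<le> c" and "walk_bound c n \<le> length xs"
  shows "\<exists>p. successively (\<lambda>x y. (x, y) \<in> E) p \<and> distinct p \<and> length p = Suc n \<and>
    hd p = hd xs \<and> set p \<subseteq> set xs"
  using assms
proof (induction n arbitrary: xs)
  case 0
  then show ?case by (intro exI[of _ "[hd xs]"]) auto
next
  case (Suc n)
  obtain x xs' where xs: "xs = x # xs'"
    using Suc.prems(2) by (cases xs) auto
  have count: "count_list (x # xs') x \<le> c"
    using Suc.prems(3) xs by blast
  then have "1 \<le> c"
    by simp
  obtain pre ys post where split: "xs = pre @ x # ys @ post" "x \<notin> set ys" "walk_bound c n \<le> length ys"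
    using long_gap_after_occurrence[OF count, of "walk_bound c n"] Suc.prems(4) xs by auto
  have "ys \<noteq> []"
    using split(3) walk_bound_pos[OF \<open>1 \<le> c\<close>, of n] by auto
  have walk: "successively (\<lambda>x y. x = y \<or> (x, y) \<in> E) (x # ys)"
    using Suc.prems(1) unfolding split(1)
    by (simp only: successively_append_iff append_Cons[symmetric])
  then have "(x, hd ys) \<in> E"
    using split(2) \<open>ys \<noteq> []\<close> by (auto simp: successively_Cons)
  have "\<forall>y. count_list ys y \<le> c"
    using Suc.prems(3) split(1) by (metis count_list_append le_add1 le_add2 order_trans count_list.simps(2))
  then obtain p where p: "successively (\<lambda>x y. (x, y) \<in> E) p" "distinct p" "length p = Suc n"
      "hd p = hd ys" "set p \<subseteq> set ys"
    using Suc.IH[of ys] walk \<open>ys \<noteq> []\<close> split(3) by (auto simp: successively_Cons)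
  show ?case
  proof (intro exI[of _ "x # p"] conjI)
    show "successively (\<lambda>x y. (x, y) \<in> E) (x # p)"
      using p(1,3,4) \<open>(x, hd ys) \<in> E\<close> by (auto simp: successively_Cons)
    show "set (x # p) \<subseteq> set xs"
      using p(5) split(1) by auto
  qed (use p split(2) xs in auto)
qed

section \<open>Embeddings and path-decompositions\<close>

lemma verts_Pair [simp]: "verts (V, E) = V" and edges_Pair [simp]: "edges (V, E) = E"
  by (simp_all add: verts_def edges_def)

lemma subgraph_iso_mono:
  "subgraph_iso G (S, E) \<Longrightarrow> S \<subseteq> T \<Longrightarrow> subgraph_iso G (T, E)"
  unfolding subgraph_iso_def by auto

lemma subgraph_iso_path_graph:
  assumes "successively (\<lambda>x y. (x, y) \<in> E) p" "distinct p" "length p = n" "set p \<subseteq> S" "sym E"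
  shows "subgraph_iso (path_graph n) (S, E)"
proof -
  have "(p ! i, p ! j) \<in> E" if "i < n" "j < n" "j = i + 1 \<or> i = j + 1" for i j
    using that successively_nth[OF assms(1)] assms(3) \<open>sym E\<close> by (auto dest: symD)
  moreover have "inj_on (nth p) {0..<n}" "nth p ` {0..<n} \<subseteq> S"
    using assms(2-4) by (auto simp: inj_on_def nth_eq_iff_index_eq)
  ultimately show ?thesis
    unfolding subgraph_iso_def path_graph_def by (intro exI[of _ "nth p"]) auto
qed

lemma subgraph_iso_join_complete_graph_0:
  assumes "subgraph_iso G X"
  shows "subgraph_iso (complete_join G (complete_graph 0)) X"
proof -
  obtain f where "inj_on f (verts G)" "f ` verts G \<subseteq> verts X"
    "\<forall>u v. (u, v) \<in> edges G \<longrightarrow> (f u, f v) \<in> edges X"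
    using assms unfolding subgraph_iso_def by blast
  then show ?thesis
    unfolding subgraph_iso_def complete_join_def complete_graph_def
    by (intro exI[of _ "case_sum f undefined"]) (auto simp: inj_on_def)
qed

lemma subgraph_iso_join_complete_graph_Suc:
  assumes "subgraph_iso (complete_join G (complete_graph j)) (S, E)"
    and "h \<notin> S" and "\<forall>y\<in>S. (h, y) \<in> E \<and> (y, h) \<in> E"
  shows "subgraph_iso (complete_join G (complete_graph (Suc j))) (insert h S, E)"
proof -
  let ?J = "complete_join G (complete_graph j)" and ?J' = "complete_join G (complete_graph (Suc j))"
  obtain f where f: "inj_on f (verts ?J)" "f ` verts ?J \<subseteq> S"
    "\<forall>u v. (u, v) \<in> edges ?J \<longrightarrow> (f u, f v) \<in> E"
    using assms(1) unfolding subgraph_iso_def by auto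
  have verts: "verts ?J' = insert (Inr j) (verts ?J)" and "Inr j \<notin> verts ?J"
    unfolding complete_join_def complete_graph_def by auto
  have edges: "(u = Inr j \<and> v \<in> verts ?J) \<or> (v = Inr j \<and> u \<in> verts ?J) \<or>
      (u \<noteq> Inr j \<and> v \<noteq> Inr j \<and> (u, v) \<in> edges ?J)"
    if "(u, v) \<in> edges ?J'" for u v
    using that unfolding complete_join_def complete_graph_def by auto
  show ?thesis
    unfolding subgraph_iso_def
  proof (intro exI[of _ "f(Inr j := h)"] conjI allI impI)
    show "inj_on (f(Inr j := h)) (verts ?J')"
      using f(1,2) \<open>h \<notin> S\<close> \<open>Inr j \<notin> verts ?J\<close> unfolding verts by (auto simp: inj_on_def)
    show "(f(Inr j := h)) ` verts ?J' \<subseteq> verts (insert h S, E)"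
      using f(2) \<open>Inr j \<notin> verts ?J\<close> unfolding verts by auto
    show "((f(Inr j := h)) u, (f(Inr j := h)) v) \<in> edges (insert h S, E)"
      if "(u, v) \<in> edges ?J'" for u v
      using edges[OF that] f(2,3) assms(3) \<open>Inr j \<notin> verts ?J\<close> by fastforce
  qed
qed

lemma pathwidth_le:
  "path_decomposition G bs \<Longrightarrow> \<forall>B\<in>set bs. card B \<le> w + 1 \<Longrightarrow> pathwidth G \<le> w"
  unfolding pathwidth_def by (intro Least_le) blast

lemma path_decomposition_map_uptI:
  assumes "\<And>s. s < M \<Longrightarrow> B s \<subseteq> verts G"
    and "\<And>v. v \<in> verts G \<Longrightarrow> \<exists>s<M. v \<in> B s"
    and "\<And>u v. (u, v) \<in> edges G \<Longrightarrow> \<exists>s<M. u \<in> B s \<and> v \<in> B s"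
    and "\<And>v i j l. i \<le> j \<Longrightarrow> j \<le> l \<Longrightarrow> l < M \<Longrightarrow> v \<in> B i \<Longrightarrow> v \<in> B l \<Longrightarrow> v \<in> B j"
  shows "path_decomposition G (map B [0..<M])"
  unfolding path_decomposition_def using assms by auto (metis add_0 diff_zero nth_map_upt)+

definition graph_image :: "('a \<Rightarrow> 'b) \<Rightarrow> 'a graph \<Rightarrow> 'b graph" where
  "graph_image g G = (g ` verts G, map_prod g g ` edges G)"

lemma verts_graph_image [simp]: "verts (graph_image g G) = g ` verts G"
  and edges_graph_image [simp]: "edges (graph_image g G) = map_prod g g ` edges G"
  by (simp_all add: graph_image_def)

lemma is_graph_image: "inj g \<Longrightarrow> is_graph G \<Longrightarrow> is_graph (graph_image g G)"
  unfolding is_graph_def sym_def by (auto simp: inj_eq)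

lemma path_decomposition_image:
  assumes "inj g" and "path_decomposition G bs"
  shows "path_decomposition (graph_image g G) (map (\<lambda>i. g ` (bs ! i)) [0..<length bs])"
proof (rule path_decomposition_map_uptI)
  have pd: "\<forall>B \<in> set bs. B \<subseteq> verts G" "\<forall>v \<in> verts G. \<exists>i < length bs. v \<in> bs ! i"
    "\<forall>u v. (u, v) \<in> edges G \<longrightarrow> (\<exists>i < length bs. u \<in> bs ! i \<and> v \<in> bs ! i)"
    "\<forall>v i j k. i \<le> j \<and> j \<le> k \<and> k < length bs \<and> v \<in> bs ! i \<and> v \<in> bs ! k \<longrightarrow> v \<in> bs ! j"
    using assms(2) unfolding path_decomposition_def by blast+
  note mem = inj_image_mem_iff[OF assms(1)]
  show "g ` (bs ! s) \<subseteq> verts (graph_image g G)" if "s < length bs" for s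
    using that pd(1) by (auto dest: nth_mem)
  show "\<exists>s<length bs. w \<in> g ` (bs ! s)" if "w \<in> verts (graph_image g G)" for w
    using that pd(2) by (auto simp: mem)
  show "\<exists>s<length bs. w \<in> g ` (bs ! s) \<and> w' \<in> g ` (bs ! s)"
    if "(w, w') \<in> edges (graph_image g G)" for w w'
    using that pd(3) by (auto simp: mem)
  show "w \<in> g ` (bs ! j)"
    if ijl: "i \<le> j" "j \<le> l" "l < length bs" and "w \<in> g ` (bs ! i)" "w \<in> g ` (bs ! l)" for w i j l
  proof -
    obtain v where "v \<in> bs ! i" "w = g v"
      using \<open>w \<in> g ` (bs ! i)\<close> by auto
    moreover from this have "v \<in> bs ! l"
      using \<open>w \<in> g ` (bs ! l)\<close> mem by simp
    ultimately show ?thesis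
      using pd(4) ijl by blast
  qed
qed

lemma subgraph_iso_of_image:
  assumes "inj g" and "subgraph_iso (graph_image g G) X"
  shows "subgraph_iso G X"
proof -
  obtain f where "inj_on f (g ` verts G)" "f ` g ` verts G \<subseteq> verts X"
    "\<forall>u v. (u, v) \<in> map_prod g g ` edges G \<longrightarrow> (f u, f v) \<in> edges X"
    using assms(2) unfolding subgraph_iso_def by auto
  with assms(1) show ?thesis
    unfolding subgraph_iso_def
    by (intro exI[of _ "f \<circ> g"]) (auto simp: comp_inj_on inj_on_subset map_prod_imageI)
qed

lemma pathwidth_image_le:
  assumes "inj g" and "path_decomposition G bs" and "\<forall>B\<in>set bs. card B \<le> w + 1"
  shows "pathwidth (graph_image g G) \<le> w"
proof (rule pathwidth_le)
  show "path_decomposition (graph_image g G) (map (\<lambda>i. g ` (bs ! i)) [0..<length bs])"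
    using assms(1,2) by (rule path_decomposition_image)
  show "\<forall>B\<in>set (map (\<lambda>i. g ` (bs ! i)) [0..<length bs]). card B \<le> w + 1"
    using assms(3) by (auto simp: card_image inj_on_subset[OF assms(1)])
qed

section \<open>Fibres in the strong product\<close>

lemma verts_strong_product [simp]: "verts (strong_product G H) = verts G \<times> verts H"
  by (simp add: strong_product_def verts_def)

lemma strong_product_edgeD:
  "(x, y) \<in> edges (strong_product G H) \<Longrightarrow>
     (fst x = fst y \<or> (fst x, fst y) \<in> edges G) \<and> (snd x = snd y \<or> (snd x, snd y) \<in> edges H)"
  unfolding strong_product_def edges_def by auto

lemma card_strong_product_fibre_le:
  fixes H :: "'a graph" and m l :: nat
  defines "X \<equiv> strong_product (strong_product H (path_graph m)) (complete_graph l)"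
  shows "card {x \<in> verts X. (x = y \<or> (y, x) \<in> edges X) \<and> fst (fst x) = h} \<le> 3 * l"
proof -
  let ?p = "snd (fst y)"
  have "x \<in> ({h} \<times> {?p - 1..?p + 1}) \<times> {0..<l}"
    if "x \<in> verts X" "x = y \<or> (y, x) \<in> edges X" "fst (fst x) = h" for x
  proof -
    have "snd (fst y) = snd (fst x) \<or> (snd (fst y), snd (fst x)) \<in> edges (path_graph m)"
      using that(2) strong_product_edgeD[of y x "strong_product H (path_graph m)" "complete_graph l"]
        strong_product_edgeD[of "fst y" "fst x" H "path_graph m"]
      unfolding X_def by auto
    then have "snd (fst x) \<in> {?p - 1..?p + 1}"
      by (auto simp: path_graph_def edges_def)
    moreover have "snd x \<in> {0..<l}"
      using that(1) by (auto simp: X_def complete_graph_def)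
    ultimately show ?thesis
      using that(3) by (cases x) auto
  qed
  then have "card {x \<in> verts X. (x = y \<or> (y, x) \<in> edges X) \<and> fst (fst x) = h}
      \<le> card (({h} \<times> {?p - 1..?p + 1}) \<times> {0..<l})"
    by (intro card_mono) auto
  also have "\<dots> \<le> 3 * l"
    by (simp add: card_cartesian_product) linarith
  finally show ?thesis .
qed

lemma card_fibre_dominated_embedding_le:
  fixes H :: "'a graph" and m l :: nat
  defines "X \<equiv> strong_product (strong_product H (path_graph m)) (complete_graph l)"
  assumes "is_graph H" and "inj_on f V" and "f ` V \<subseteq> verts X" and "r \<in> V"
    and "\<And>v. v \<in> V \<Longrightarrow> v \<noteq> r \<Longrightarrow> (f r, f v) \<in> edges X"
  shows "card {v \<in> V. fst (fst (f v)) = h} \<le> 3 * l"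
proof -
  let ?F = "{x \<in> verts X. (x = f r \<or> (f r, x) \<in> edges X) \<and> fst (fst x) = h}"
  have "finite ?F"
    using \<open>is_graph H\<close> by (simp add: X_def is_graph_def path_graph_def complete_graph_def)
  moreover have "f ` {v \<in> V. fst (fst (f v)) = h} \<subseteq> ?F"
    using assms(4,6) by blast
  ultimately have "card (f ` {v \<in> V. fst (fst (f v)) = h}) \<le> card ?F"
    by (rule card_mono)
  also have "\<dots> \<le> 3 * l"
    unfolding X_def by (rule card_strong_product_fibre_le)
  finally show ?thesis
    by (simp add: card_image inj_on_subset[OF assms(3)])
qed

section \<open>The tree of paths\<close>

lemma div_power_Suc_diff: "d < e \<Longrightarrow> (t::nat) div C ^ (e - d) = t div C ^ (e - Suc d) div C"
  by (metis Suc_diff_Suc div_mult2_eq power_Suc2)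

lemma mult_power_div_power:
  assumes "0 < C" and "d \<le> d'" and "d' \<le> k"
  shows "(a::nat) * C ^ (k - d') div C ^ (k - d) = a div C ^ (d' - d)"
proof -
  have "C ^ (k - d) = C ^ (k - d') * C ^ (d' - d)"
    using assms(2,3) by (simp flip: power_add)
  then show ?thesis
    using assms(1) by (simp add: div_mult2_eq)
qed

lemma mult_power_less_power:
  "0 < C \<Longrightarrow> (a::nat) < C ^ d \<Longrightarrow> d \<le> k \<Longrightarrow> a * C ^ (k - d) < C ^ k"
  by (metis le_add_diff_inverse mult_less_cancel2 power_add zero_less_power)

lemma div_power_diff_less: "0 < C \<Longrightarrow> (t::nat) < C ^ k \<Longrightarrow> d \<le> k \<Longrightarrow> t div C ^ (k - d) < C ^ d"
  by (simp add: div_less_iff_less_mult flip: power_add)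

lemma child_index_less: "a < C ^ d \<Longrightarrow> r < C \<Longrightarrow> a * C + r < (C::nat) ^ Suc d"
proof -
  assume "a < C ^ d" and "r < C"
  then have "a * C + r < (a + 1) * C"
    by simp
  also have "\<dots> \<le> C ^ d * C"
    using \<open>a < C ^ d\<close> by (intro mult_right_mono) auto
  finally show ?thesis
    by (simp add: mult.commute)
qed

(* Inl (d, a) is node a at depth d < k of the complete C-ary tree, whose children are the
   nodes a * C + r with r < C; each leaf t < C ^ k is replaced by the path Inr (t, 0), ...,
   Inr (t, N - 1).  A node is adjacent to all of its descendants. *)
type_synonym tree_vertex = "(nat \<times> nat) + (nat \<times> nat)"

definition tree_vertices :: "nat \<Rightarrow> nat \<Rightarrow> nat \<Rightarrow> tree_vertex set" where
  "tree_vertices C k N =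
     {Inl (d, a) | d a. d < k \<and> a < C ^ d} \<union> {Inr (t, i) | t i. t < C ^ k \<and> i < N}"

fun tree_arc :: "nat \<Rightarrow> nat \<Rightarrow> tree_vertex \<Rightarrow> tree_vertex \<Rightarrow> bool" where
  "tree_arc C k (Inl (d, a)) (Inl (d', a')) \<longleftrightarrow> d < d' \<and> a' div C ^ (d' - d) = a"
| "tree_arc C k (Inl (d, a)) (Inr (t, i)) \<longleftrightarrow> t div C ^ (k - d) = a"
| "tree_arc C k (Inr (t, i)) (Inr (t', i')) \<longleftrightarrow> t' = t \<and> i' = Suc i"
| "tree_arc C k (Inr _) (Inl _) \<longleftrightarrow> False"

definition tree_graph :: "nat \<Rightarrow> nat \<Rightarrow> nat \<Rightarrow> tree_vertex graph" where
  "tree_graph C k N = (tree_vertices C k N,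
     {(u, v). u \<in> tree_vertices C k N \<and> v \<in> tree_vertices C k N \<and> (tree_arc C k u v \<or> tree_arc C k v u)})"

lemma Inl_in_tree_vertices [simp]: "Inl (d, a) \<in> tree_vertices C k N \<longleftrightarrow> d < k \<and> a < C ^ d"
  and Inr_in_tree_vertices [simp]: "Inr (t, i) \<in> tree_vertices C k N \<longleftrightarrow> t < C ^ k \<and> i < N"
  by (auto simp: tree_vertices_def)

lemma finite_tree_vertices: "finite (tree_vertices C k N)"
proof -
  have "tree_vertices C k N = Inl ` (SIGMA d:{..<k}. {..<C ^ d}) \<union> Inr ` ({..<C ^ k} \<times> {..<N})"
    by (auto simp: tree_vertices_def)
  then show ?thesis
    by simp
qed

lemma is_graph_tree_graph: "is_graph (tree_graph C k N)"
proof -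
  have "\<not> tree_arc C k v v" for v
    by (cases v) auto
  then show ?thesis
    unfolding is_graph_def tree_graph_def sym_def by (auto simp: finite_tree_vertices)
qed

(* Bag s belongs to the leaf t = s div q: it holds the k ancestors of t and one edge of the path
   at t, which has q + 1 vertices. *)
definition tree_bag :: "nat \<Rightarrow> nat \<Rightarrow> nat \<Rightarrow> nat \<Rightarrow> tree_vertex set" where
  "tree_bag C k q s = (\<lambda>d. Inl (d, s div q div C ^ (k - d))) ` {..<k} \<union>
     {Inr (s div q, s mod q), Inr (s div q, Suc (s mod q))}"

lemma Inl_in_tree_bag [simp]: "Inl (d, a) \<in> tree_bag C k q s \<longleftrightarrow> d < k \<and> a = s div q div C ^ (k - d)"
  and Inr_in_tree_bag [simp]:
    "Inr (t, i) \<in> tree_bag C k q s \<longleftrightarrow> t = s div q \<and> (i = s mod q \<or> i = Suc (s mod q))"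
  by (auto simp: tree_bag_def)

lemma card_tree_bag_le: "card (tree_bag C k q s) \<le> k + 2"
proof -
  have "card (tree_bag C k q s) \<le> card ((\<lambda>d. Inl (d, s div q div C ^ (k - d))) ` {..<k} :: tree_vertex set)
      + card {Inr (s div q, s mod q), Inr (s div q, Suc (s mod q)) :: tree_vertex}"
    unfolding tree_bag_def by (rule card_Un_le)
  also have "\<dots> \<le> k + 2"
    by (intro add_mono card_image_le[of "{..<k}", simplified] card_insert_le_m1[of 2, simplified]) auto
  finally show ?thesis .
qed

lemma tree_bag_subset:
  assumes "0 < C" and "0 < q" and "s < C ^ k * q"
  shows "tree_bag C k q s \<subseteq> tree_vertices C k (Suc q)"
proof -
  have "s div q < C ^ k" "s mod q < Suc q"
    using assms(2,3) by (simp_all add: div_less_iff_less_mult less_SucI)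
  then show ?thesis
    using assms(1,2) div_power_diff_less by (auto simp: tree_bag_def)
qed

lemma tree_bag_at_leaf:
  assumes "0 < q" and "t < C ^ k" and "i \<le> q"
  shows "\<exists>s < C ^ k * q. s div q = t \<and> Inr (t, i) \<in> tree_bag C k q s"
proof -
  define s where "s = t * q + min i (q - 1)"
  have "s div q = t" "s mod q = min i (q - 1)"
    using assms(1) by (auto simp: s_def)
  moreover have "s < C ^ k * q"
  proof -
    have "s < (t + 1) * q"
      using assms(1) by (simp add: s_def)
    also have "\<dots> \<le> C ^ k * q"
      using assms(2) by (intro mult_right_mono) auto
    finally show ?thesis .
  qed
  ultimately show ?thesis
    using assms(3) by (intro exI[of _ s]) auto
qed

lemma tree_bag_at_inner_vertex:
  assumes "0 < C" and "0 < q" and "d \<le> k" and "a < C ^ d"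
  shows "\<exists>s < C ^ k * q. \<forall>d'\<le>d. d' < k \<longrightarrow> Inl (d', a div C ^ (d - d')) \<in> tree_bag C k q s"
proof -
  obtain s where "s < C ^ k * q" "s div q = a * C ^ (k - d)"
    using tree_bag_at_leaf[OF assms(2) mult_power_less_power[OF assms(1,4,3)], of 0] by auto
  then show ?thesis
    using assms(1,3) by (intro exI[of _ s]) (auto simp: mult_power_div_power)
qed

lemma tree_bag_interval:
  assumes "i \<le> j" and "j \<le> l" and "v \<in> tree_bag C k q i" and "v \<in> tree_bag C k q l"
  shows "v \<in> tree_bag C k q j"
proof (cases v)
  case (Inl x)
  obtain d a where v: "v = Inl (d, a)"
    using Inl by (cases x) auto
  have "i div q div C ^ (k - d) \<le> j div q div C ^ (k - d)" "j div q div C ^ (k - d) \<le> l div q div C ^ (k - d)"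
    using assms(1,2) by (simp_all add: div_le_mono)
  then show ?thesis
    using assms(3,4) unfolding v by simp
next
  case (Inr x)
  obtain t i' where v: "v = Inr (t, i')"
    using Inr by (cases x) auto
  have "t = i div q" "t = l div q" "i' = i mod q \<or> i' = Suc (i mod q)" "i' = l mod q \<or> i' = Suc (l mod q)"
    using assms(3,4) unfolding v by simp_all
  then have "l \<le> Suc i"
    by (metis div_mult_mod_eq add_Suc_right add_left_mono le_SucI le_refl)
  then have "j = i \<or> j = l"
    using assms(1,2) by linarith
  then show ?thesis
    using assms(3,4) by auto
qed

lemma tree_arc_in_tree_bag:
  assumes "0 < C" and "0 < q"
    and "u \<in> tree_vertices C k (Suc q)" and "v \<in> tree_vertices C k (Suc q)" and "tree_arc C k u v"
  shows "\<exists>s < C ^ k * q. u \<in> tree_bag C k q s \<and> v \<in> tree_bag C k q s"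
proof -
  from assms(5) consider
      (inner) d a d' a' where "u = Inl (d, a)" "v = Inl (d', a')" "d < d'" "a' div C ^ (d' - d) = a"
    | (leaf) d a t i where "u = Inl (d, a)" "v = Inr (t, i)" "t div C ^ (k - d) = a"
    | (path) t i where "u = Inr (t, i)" "v = Inr (t, Suc i)"
    by (cases "(C, k, u, v)" rule: tree_arc.cases) auto
  then show ?thesis
  proof cases
    case inner
    then have "d' < k" "a' < C ^ d'"
      using assms(4) by auto
    then obtain s where "s < C ^ k * q"
      and s: "\<And>d''. d'' \<le> d' \<Longrightarrow> d'' < k \<Longrightarrow> Inl (d'', a' div C ^ (d' - d'')) \<in> tree_bag C k q s"
      using tree_bag_at_inner_vertex[OF assms(1,2), of d' k a'] by auto
    moreover have "u \<in> tree_bag C k q s" "v \<in> tree_bag C k q s"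
      using s[of d] s[of d'] inner \<open>d' < k\<close> by auto
    ultimately show ?thesis
      by blast
  next
    case leaf
    then have "t < C ^ k" "i \<le> q"
      using assms(4) by auto
    then obtain s where "s < C ^ k * q" "s div q = t" "Inr (t, i) \<in> tree_bag C k q s"
      using tree_bag_at_leaf[OF assms(2)] by blast
    moreover have "d < k"
      using assms(3) leaf(1) by simp
    ultimately show ?thesis
      using leaf by auto
  next
    case path
    have "t * q + i < (t + 1) * q"
      using assms(4) path(2) by simp
    also have "\<dots> \<le> C ^ k * q"
      using assms(4) path(2) by (intro mult_right_mono) auto
    finally show ?thesis
      using assms(2,4) path by (intro exI[of _ "t * q + i"]) auto
  qed
qed

lemma path_decomposition_tree_graph:
  assumes "0 < C" and "0 < q"
  shows "path_decomposition (tree_graph C k (Suc q)) (map (tree_bag C k q) [0..<C ^ k * q])"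
proof (rule path_decomposition_map_uptI)
  show "tree_bag C k q s \<subseteq> verts (tree_graph C k (Suc q))" if "s < C ^ k * q" for s
    using tree_bag_subset[OF assms that] by (simp add: tree_graph_def)
  show "\<exists>s < C ^ k * q. v \<in> tree_bag C k q s" if v: "v \<in> verts (tree_graph C k (Suc q))" for v
  proof (cases v)
    case (Inl x)
    then obtain d a where "v = Inl (d, a)" "d < k" "a < C ^ d"
      using v by (cases x) (auto simp: tree_graph_def)
    then show ?thesis
      using tree_bag_at_inner_vertex[OF assms, of d k a] by force
  next
    case (Inr x)
    then obtain t i where "v = Inr (t, i)" "t < C ^ k" "i \<le> q"
      using v by (cases x) (auto simp: tree_graph_def)
    then show ?thesis
      using tree_bag_at_leaf[OF assms(2)] by blast
  qed
  show "\<exists>s < C ^ k * q. u \<in> tree_bag C k q s \<and> v \<in> tree_bag C k q s"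
    if "(u, v) \<in> edges (tree_graph C k (Suc q))" for u v
  proof -
    have "u \<in> tree_vertices C k (Suc q)" "v \<in> tree_vertices C k (Suc q)"
      "tree_arc C k u v \<or> tree_arc C k v u"
      using that by (auto simp: tree_graph_def)
    then show ?thesis
      using tree_arc_in_tree_bag[OF assms] by blast
  qed
qed (rule tree_bag_interval)

lemma tree_graph_decomposition:
  assumes "0 < C" and "0 < q"
  shows "\<exists>bs. path_decomposition (tree_graph C k (Suc q)) bs \<and> (\<forall>B\<in>set bs. card B \<le> k + 2)"
  using path_decomposition_tree_graph[OF assms] card_tree_bag_le
  by (intro exI[of _ "map (tree_bag C k q) [0..<C ^ k * q]"]) auto

section \<open>Embedding the tree forces a join\<close>

(* For d = k this is the path attached to leaf a. *)
definition subtree :: "nat \<Rightarrow> nat \<Rightarrow> nat \<Rightarrow> nat \<Rightarrow> nat \<Rightarrow> tree_vertex set" where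
  "subtree C k N d a = {v \<in> tree_vertices C k N. v = Inl (d, a) \<or> tree_arc C k (Inl (d, a)) v}"

lemma Inl_in_subtree [simp]:
  "Inl (d', a') \<in> subtree C k N d a \<longleftrightarrow> d' < k \<and> a' < C ^ d' \<and> d \<le> d' \<and> a' div C ^ (d' - d) = a"
  by (auto simp: subtree_def)

lemma Inr_in_subtree [simp]:
  "Inr (t, i) \<in> subtree C k N d a \<longleftrightarrow> t < C ^ k \<and> i < N \<and> t div C ^ (k - d) = a"
  by (auto simp: subtree_def)

lemma subtree_Suc_disjoint:
  "v \<in> subtree C k N (Suc d) b \<Longrightarrow> v \<in> subtree C k N (Suc d) b' \<Longrightarrow> b = b'"
  by (cases v) auto

lemma child_subtree_adjacent:
  assumes "v \<in> subtree C k N (Suc d) (a * C + r)" and "r < C" and "d < k" and "a < C ^ d"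
  shows "v \<in> subtree C k N d a" and "(Inl (d, a), v) \<in> edges (tree_graph C k N)"
proof -
  have "tree_arc C k (Inl (d, a)) v"
    using assms(1-3) by (cases v) (auto simp: div_power_Suc_diff)
  moreover have "v \<in> tree_vertices C k N"
    using assms(1) by (simp add: subtree_def)
  ultimately show "v \<in> subtree C k N d a" "(Inl (d, a), v) \<in> edges (tree_graph C k N)"
    using assms(3,4) by (auto simp: subtree_def tree_graph_def)
qed

lemma exists_child_subtree_avoiding:
  fixes \<phi> :: "tree_vertex \<Rightarrow> 'b"
  assumes fibre: "\<And>h. card {v \<in> tree_vertices C k N. \<phi> v = h} \<le> c" and "c < C"
    and "d < k" and "a < C ^ d"
  shows "\<exists>r<C. \<forall>v \<in> subtree C k N (Suc d) (a * C + r). \<phi> v \<noteq> \<phi> (Inl (d, a))"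
proof (rule ccontr)
  let ?h = "\<phi> (Inl (d, a))"
  assume "\<not> ?thesis"
  then obtain w where w: "\<And>r. r < C \<Longrightarrow> w r \<in> subtree C k N (Suc d) (a * C + r) \<and> \<phi> (w r) = ?h"
    by metis
  have "inj_on w {..<C}"
    using w subtree_Suc_disjoint by (fastforce intro: inj_onI)
  moreover have "Inl (d, a) \<notin> w ` {..<C}"
  proof
    assume "Inl (d, a) \<in> w ` {..<C}"
    then obtain r where "r < C" "w r = Inl (d, a)"
      by auto
    with w[of r] show False
      by simp
  qed
  moreover have "insert (Inl (d, a)) (w ` {..<C}) \<subseteq> {v \<in> tree_vertices C k N. \<phi> v = ?h}"
    using w assms(3,4) by (auto simp: subtree_def)
  ultimately have "Suc C \<le> card {v \<in> tree_vertices C k N. \<phi> v = ?h}"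
    using card_mono[OF _ \<open>insert _ _ \<subseteq> _\<close>] finite_tree_vertices by (simp add: card_image)
  with fibre[of ?h] \<open>c < C\<close> show False
    by simp
qed

lemma leaf_path_image_contains_path:
  fixes \<phi> :: "tree_vertex \<Rightarrow> 'b"
  assumes hom: "\<And>u v. (u, v) \<in> edges (tree_graph C k N) \<Longrightarrow> \<phi> u = \<phi> v \<or> (\<phi> u, \<phi> v) \<in> E"
    and fibre: "\<And>h. card {v \<in> tree_vertices C k N. \<phi> v = h} \<le> c"
    and "0 < N" and "walk_bound c (n - 1) \<le> N" and "1 \<le> n" and "t < C ^ k"
  shows "\<exists>p. successively (\<lambda>x y. (x, y) \<in> E) p \<and> distinct p \<and> length p = n \<and>
    set p \<subseteq> \<phi> ` subtree C k N k t"
proof -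
  let ?xs = "map (\<lambda>i. \<phi> (Inr (t, i))) [0..<N]"
  have "successively (\<lambda>x y. x = y \<or> (x, y) \<in> E) ?xs"
    using hom \<open>t < C ^ k\<close> by (intro successively_map_upt) (auto simp: tree_graph_def)
  moreover have "count_list ?xs y \<le> c" for y
  proof -
    have "count_list ?xs y = card {i. i < N \<and> y = ?xs ! i}"
      by (simp only: count_list_eq_length_filter length_filter_conv_card length_map length_upt diff_zero)
    also have "\<dots> = card {i. i < N \<and> \<phi> (Inr (t, i)) = y}"
      by (rule arg_cong[where f = card]) auto
    also have "\<dots> = card ((\<lambda>i. Inr (t, i) :: tree_vertex) ` {i. i < N \<and> \<phi> (Inr (t, i)) = y})"
      by (simp add: card_image inj_on_def)
    also have "\<dots> \<le> card {v \<in> tree_vertices C k N. \<phi> v = y}"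
      using \<open>t < C ^ k\<close> by (intro card_mono finite_subset[OF _ finite_tree_vertices]) auto
    finally show ?thesis
      using fibre[of y] by linarith
  qed
  ultimately obtain p where p: "successively (\<lambda>x y. (x, y) \<in> E) p" "distinct p" "length p = n"
    "set p \<subseteq> set ?xs"
    using lazy_walk_contains_path[of E ?xs c "n - 1"] assms(3-5) by auto
  have "Inr (t, i) \<in> subtree C k N k t" if "i < N" for i
    using \<open>t < C ^ k\<close> that by simp
  then have "set ?xs \<subseteq> \<phi> ` subtree C k N k t"
    by auto
  with p show ?thesis
    by (intro exI[of _ p]) auto
qed

lemma subtree_forces_join:
  fixes \<phi> :: "tree_vertex \<Rightarrow> 'b"
  assumes hom: "\<And>u v. (u, v) \<in> edges (tree_graph C k N) \<Longrightarrow> \<phi> u = \<phi> v \<or> (\<phi> u, \<phi> v) \<in> E"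
    and fibre: "\<And>h. card {v \<in> tree_vertices C k N. \<phi> v = h} \<le> c" and "c < C"
    and "sym E" and irrefl: "\<And>x. (x, x) \<notin> E"
    and "0 < N" and "walk_bound c (n - 1) \<le> N" and "1 \<le> n"
    and "d \<le> k" and "a < C ^ d" and "\<phi> ` subtree C k N d a \<subseteq> S"
  shows "subgraph_iso (complete_join (path_graph n) (complete_graph (k - d))) (S, E)"
  using assms(9-11)
proof (induction d arbitrary: a S rule: inc_induct)
  case base
  obtain p where p: "successively (\<lambda>x y. (x, y) \<in> E) p" "distinct p" "length p = n"
    and "set p \<subseteq> \<phi> ` subtree C k N k a"
    using leaf_path_image_contains_path[OF hom fibre assms(6-8) base(1)] by blast
  then have "set p \<subseteq> S"
    using base(2) by blast
  with p have "subgraph_iso (path_graph n) (S, E)"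
    using \<open>sym E\<close> by (rule subgraph_iso_path_graph)
  then show ?case
    by (simp add: subgraph_iso_join_complete_graph_0)
next
  case (step d)
  let ?h = "\<phi> (Inl (d, a))"
  obtain r where "r < C" and avoid: "\<forall>v \<in> subtree C k N (Suc d) (a * C + r). \<phi> v \<noteq> ?h"
    using exists_child_subtree_avoiding[OF fibre \<open>c < C\<close> step(2,4)] by blast
  define S' where "S' = {y \<in> S. (?h, y) \<in> E \<and> (y, ?h) \<in> E}"
  have "\<phi> v \<in> S'" if v: "v \<in> subtree C k N (Suc d) (a * C + r)" for v
  proof -
    note child = child_subtree_adjacent[OF v \<open>r < C\<close> step(2,4)]
    have "\<phi> v \<in> S"
      using child(1) step(5) by blast
    moreover have "(?h, \<phi> v) \<in> E"
      using hom[OF child(2)] avoid v by auto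
    ultimately show ?thesis
      using \<open>sym E\<close> unfolding S'_def by (auto intro: symD)
  qed
  then have "subgraph_iso (complete_join (path_graph n) (complete_graph (k - Suc d))) (S', E)"
    using step.IH child_index_less[OF step(4) \<open>r < C\<close>] by blast
  then have "subgraph_iso (complete_join (path_graph n) (complete_graph (Suc (k - Suc d)))) (insert ?h S', E)"
    using irrefl by (intro subgraph_iso_join_complete_graph_Suc) (auto simp: S'_def)
  moreover have "Suc (k - Suc d) = k - d"
    using step(2) by simp
  moreover have "insert ?h S' \<subseteq> S"
    using step(2,4,5) by (auto simp: S'_def)
  ultimately show ?case
    by (metis subgraph_iso_mono)
qed

lemma tree_root_adjacent:
  assumes "1 \<le> k" and "v \<in> tree_vertices C k N" and "v \<noteq> Inl (0, 0)"
  shows "(Inl (0, 0), v) \<in> edges (tree_graph C k N)"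
proof -
  have "tree_arc C k (Inl (0, 0)) v"
  proof (cases v)
    case (Inl x)
    then obtain d a where v: "v = Inl (d, a)" "d < k" "a < C ^ d"
      using assms(2) by (cases x) auto
    then have "d \<noteq> 0"
      using assms(3) by (cases "d = 0") auto
    with v show ?thesis
      by simp
  qed (use assms(2) in auto)
  then show ?thesis
    using assms(1,2) by (simp add: tree_graph_def)
qed

lemma tree_graph_in_strong_product_forces_join:
  fixes H :: "'a graph"
  assumes "is_graph H" and "1 \<le> k" and "1 \<le> n" and "0 < N"
    and "3 * l < C" and "walk_bound (3 * l) (n - 1) \<le> N"
    and "subgraph_iso (tree_graph C k N) (strong_product (strong_product H (path_graph m)) (complete_graph l))"
  shows "subgraph_iso (complete_join (path_graph n) (complete_graph k)) H"
proof -
  let ?X = "strong_product (strong_product H (path_graph m)) (complete_graph l)"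
  let ?V = "tree_vertices C k N"
  obtain f where f: "inj_on f ?V" "f ` ?V \<subseteq> verts ?X"
    "\<And>u v. (u, v) \<in> edges (tree_graph C k N) \<Longrightarrow> (f u, f v) \<in> edges ?X"
    using assms(7) unfolding subgraph_iso_def by (auto simp: tree_graph_def)
  define \<phi> where "\<phi> v = fst (fst (f v))" for v
  have hom: "\<phi> u = \<phi> v \<or> (\<phi> u, \<phi> v) \<in> edges H" if "(u, v) \<in> edges (tree_graph C k N)" for u v
    using strong_product_edgeD[OF f(3)[OF that]] strong_product_edgeD[of "fst (f u)" "fst (f v)" H "path_graph m"]
    unfolding \<phi>_def by auto
  have "Inl (0, 0) \<in> ?V"
    using assms(2) by simp
  have fibre: "card {v \<in> ?V. \<phi> v = h} \<le> 3 * l" for h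
    unfolding \<phi>_def using tree_root_adjacent[OF assms(2)] f(3)
    by (intro card_fibre_dominated_embedding_le[OF \<open>is_graph H\<close> f(1,2) \<open>Inl (0, 0) \<in> ?V\<close>]) blast
  have "\<phi> ` subtree C k N 0 0 \<subseteq> verts H"
    using f(2) unfolding \<phi>_def subtree_def by auto
  moreover have "sym (edges H)" "\<And>x. (x, x) \<notin> edges H"
    using \<open>is_graph H\<close> by (auto simp: is_graph_def)
  ultimately have "subgraph_iso (complete_join (path_graph n) (complete_graph (k - 0))) (verts H, edges H)"
    by (intro subtree_forces_join[where d = 0 and a = 0, OF hom fibre assms(5) _ _ assms(4,6,3)]) simp_all
  then show ?thesis
    by (simp add: verts_def edges_def)
qed

theorem proposition10:
  fixes k l n :: nat
  assumes "k \<ge> 1" and "l \<ge> 1" and "n \<ge> 1"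
  shows "\<exists>G :: nat graph. is_graph G \<and> pathwidth G \<le> k + 1 \<and>
    (\<forall>(H :: nat graph) m. is_graph H \<longrightarrow> m \<ge> 1 \<longrightarrow>
       subgraph_iso G (strong_product (strong_product H (path_graph m)) (complete_graph l)) \<longrightarrow>
       subgraph_iso (complete_join (path_graph n) (complete_graph k)) H)"
proof -
  define q where "q = walk_bound (3 * l) (n - 1)"
  define T where "T = tree_graph (Suc (3 * l)) k (Suc q)"
  have "0 < q"
    using walk_bound_pos[of "3 * l" "n - 1"] assms(2) by (simp add: q_def)
  then obtain bs where "path_decomposition T bs" "\<forall>B\<in>set bs. card B \<le> (k + 1) + 1"
    using tree_graph_decomposition[of "Suc (3 * l)" q k] by (auto simp: T_def)
  then have "pathwidth (graph_image to_nat T) \<le> k + 1"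
    by (intro pathwidth_image_le[OF inj_to_nat])
  moreover have "is_graph (graph_image to_nat T)"
    by (simp add: T_def inj_to_nat is_graph_image is_graph_tree_graph)
  moreover have "subgraph_iso (complete_join (path_graph n) (complete_graph k)) H"
    if "is_graph H" and "subgraph_iso (graph_image to_nat T) (strong_product (strong_product H (path_graph m)) (complete_graph l))"
    for H :: "nat graph" and m
  proof -
    have "subgraph_iso (tree_graph (Suc (3 * l)) k (Suc q))
        (strong_product (strong_product H (path_graph m)) (complete_graph l))"
      using subgraph_iso_of_image[OF inj_to_nat that(2)] by (simp add: T_def)
    from tree_graph_in_strong_product_forces_join[OF \<open>is_graph H\<close> assms(1,3) _ _ _ this]
    show ?thesis
      by (simp add: q_def)
  qed
  ultimately show ?thesis
    by blast
qed

end
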